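(* Let $(X,\le)$ be a poset and $E$ an equivalence relation on $X$ with ${\le}\subseteq E$. If $\alpha:X\to X$ is an order automorphism of $(X,\le)$ with $\alpha\subseteq E$, then $\alpha\circ({\le}^c)^\smile=({\le}^c)^\smile\circ\alpha$, and this relation belongs to $\mathsf{Up}(\mathbf E)$.
   Context: For binary relations: converse $R^\smile=\{(x,y)\mid(y,x)\in R\}$; composition $R\circ S=\{(x,y)\mid\exists z\,((x,z)\in R,(z,y)\in S)\}$. A function $\alpha$ is identified with its graph $\{(x,\alpha(x))\}$. For a poset $(X,\le)$ and an equivalence relation $E\supseteq{\le}$ on $X$, $E$ is partially ordered by $(u,v)\preceq(x,y)$ iff $x\le u$ and $v\le y$; $\mathbf E=(E,\preceq)$ and $\mathsf{Up}(\mathbf E)$ is its set of up-sets. For $R\subseteq E$, $R^c=E\setminus R$. An order automorphism is a bijection $\alpha$ with $x\le y\iff\alpha(x)\le\alpha(y)$. *)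

theory Defs
  imports Main
begin

definition graph_on :: "'a set \<Rightarrow> ('a \<Rightarrow> 'a) \<Rightarrow> 'a rel" where
  "graph_on X f = {(x, f x) | x. x \<in> X}"

definition order_automorphism :: "'a set \<Rightarrow> 'a rel \<Rightarrow> ('a \<Rightarrow> 'a) \<Rightarrow> bool" where
  "order_automorphism X le f \<longleftrightarrow> bij_betw f X X \<and>
     (\<forall>x\<in>X. \<forall>y\<in>X. (x, y) \<in> le \<longleftrightarrow> (f x, f y) \<in> le)"

definition E_ord :: "'a rel \<Rightarrow> ('a \<times> 'a) \<Rightarrow> ('a \<times> 'a) \<Rightarrow> bool" where
  "E_ord le p q \<longleftrightarrow> (fst q, fst p) \<in> le \<and> (snd p, snd q) \<in> le"

definition Up :: "'a rel \<Rightarrow> 'a rel \<Rightarrow> 'a rel set" where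
  "Up le E = {U. U \<subseteq> E \<and> (\<forall>p\<in>U. \<forall>q\<in>E. E_ord le p q \<longrightarrow> q \<in> U)}"

end

theory Submission
  imports Defs
begin

text \<open>Since \<open>\<alpha>\<close> moves every point only inside its \<open>E\<close>-class and preserves and reflects \<open>\<le>\<close>,
  it leaves \<open>E - \<le>\<close> invariant, and conjugating an invariant relation by a bijection does not change it;
  this gives the commutation. The converse of \<open>E - \<le>\<close> is an up-set of \<open>\<^bold>E\<close> by transitivity of \<open>\<le>\<close>,
  and precomposing an up-set with the graph of a monotone map that stays inside \<open>E\<close> yields an up-set.\<close>

lemma graph_on_iff [simp]: "(x, y) \<in> graph_on X f \<longleftrightarrow> x \<in> X \<and> y = f x"
  by (auto simp: graph_on_def)

lemma graph_on_relcomp_commute: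
  assumes "bij_betw f X X" and "R \<subseteq> X \<times> X"
    and "\<And>x y. x \<in> X \<Longrightarrow> y \<in> X \<Longrightarrow> (f x, f y) \<in> R \<longleftrightarrow> (x, y) \<in> R"
  shows "graph_on X f O R = R O graph_on X f"
proof (rule set_eqI, clarify)
  fix x y
  show "(x, y) \<in> graph_on X f O R \<longleftrightarrow> (x, y) \<in> R O graph_on X f"
  proof
    assume "(x, y) \<in> graph_on X f O R"
    then have x: "x \<in> X" and R: "(f x, y) \<in> R" by auto
    then obtain z where z: "z \<in> X" "y = f z"
      using assms(1,2) by (metis SigmaD2 bij_betw_imp_surj_on imageE subsetD)
    with x R assms(3) have "(x, z) \<in> R" by auto
    with z show "(x, y) \<in> R O graph_on X f" by auto
  next
    assume "(x, y) \<in> R O graph_on X f"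
    then obtain z where R: "(x, z) \<in> R" and z: "z \<in> X" "y = f z" by auto
    with assms(2) have x: "x \<in> X" by auto
    with R z assms(3) have "(f x, y) \<in> R" by auto
    with x show "(x, y) \<in> graph_on X f O R" by auto
  qed
qed

lemma equiv_graph_on_invariant:
  assumes "equiv X E" and "graph_on X f \<subseteq> E" and "x \<in> X" and "y \<in> X"
  shows "(f x, f y) \<in> E \<longleftrightarrow> (x, y) \<in> E"
proof -
  have "(x, f x) \<in> E" and "(y, f y) \<in> E" using assms(2-4) by auto
  with assms(1) show ?thesis by (meson equivE symE transE)
qed

lemma converse_Diff_in_Up:
  assumes "sym E" and "trans le"
  shows "(E - le)\<inverse> \<in> Up le E"
  unfolding Up_def
proof (intro CollectI conjI ballI impI)
  show "(E - le)\<inverse> \<subseteq> E" using assms(1) by (auto dest: symD)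
next
  fix p q
  assume "p \<in> (E - le)\<inverse>" and "q \<in> E" and "E_ord le p q"
  then obtain u v x y where "p = (u, v)" "q = (x, y)" "(v, u) \<notin> le" "(x, y) \<in> E"
    "(x, u) \<in> le" "(v, y) \<in> le"
    by (cases p; cases q) (auto simp: E_ord_def)
  with assms show "q \<in> (E - le)\<inverse>" by (auto dest: symD transD)
qed

lemma graph_on_relcomp_Up:
  assumes "equiv X E" and "graph_on X f \<subseteq> E"
    and mono: "\<And>x y. x \<in> X \<Longrightarrow> y \<in> X \<Longrightarrow> (x, y) \<in> le \<Longrightarrow> (f x, f y) \<in> le"
    and "U \<in> Up le E"
  shows "graph_on X f O U \<in> Up le E"
  unfolding Up_def
proof (intro CollectI conjI ballI impI)
  have E_X: "E \<subseteq> X \<times> X" and E_trans: "trans E" and E_sym: "sym E"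
    using assms(1) by (auto simp: equiv_def refl_on_def)
  have U: "U \<subseteq> E" and U_up: "\<And>p q. p \<in> U \<Longrightarrow> q \<in> E \<Longrightarrow> E_ord le p q \<Longrightarrow> q \<in> U"
    using assms(4) by (auto simp: Up_def)
  show "graph_on X f O U \<subseteq> E"
    using assms(2) U E_trans by (auto dest: transD)
  fix p q
  assume "p \<in> graph_on X f O U" and "q \<in> E" and "E_ord le p q"
  then obtain x y x' y' where p: "p = (x, y)" "x \<in> X" "(f x, y) \<in> U"
    and q: "q = (x', y')" "(x', y') \<in> E" "(x', x) \<in> le" "(y, y') \<in> le"
    by (cases q) (auto simp: E_ord_def)
  have x': "x' \<in> X" using q E_X by auto
  have "(x', f x') \<in> E" using assms(2) x' by auto
  then have "(f x', x') \<in> E" using E_sym by (auto dest: symD)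
  with q E_trans have "(f x', y') \<in> E" by (auto dest: transD)
  moreover have "E_ord le (f x, y) (f x', y')"
    using mono[OF x' p(2)] q by (simp add: E_ord_def)
  ultimately have "(f x', y') \<in> U" using U_up p(3) by blast
  with x' q(1) show "q \<in> graph_on X f O U" by auto
qed

theorem lemma3p9:
  fixes X :: "'a set" and le E :: "'a rel" and \<alpha> :: "'a \<Rightarrow> 'a"
  assumes "le \<subseteq> X \<times> X" and "partial_order_on X le"
    and "equiv X E" and "le \<subseteq> E"
    and "order_automorphism X le \<alpha>" and "graph_on X \<alpha> \<subseteq> E"
  shows "graph_on X \<alpha> O (E - le)\<inverse> = (E - le)\<inverse> O graph_on X \<alpha> \<and>
           graph_on X \<alpha> O (E - le)\<inverse> \<in> Up le E"
proof
  have bij: "bij_betw \<alpha> X X"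
    and ord: "\<And>x y. x \<in> X \<Longrightarrow> y \<in> X \<Longrightarrow> (\<alpha> x, \<alpha> y) \<in> le \<longleftrightarrow> (x, y) \<in> le"
    using assms(5) by (auto simp: order_automorphism_def)
  have "(E - le)\<inverse> \<subseteq> X \<times> X"
    using assms(3) by (auto simp: equiv_def refl_on_def)
  moreover have "(\<alpha> x, \<alpha> y) \<in> (E - le)\<inverse> \<longleftrightarrow> (x, y) \<in> (E - le)\<inverse>" if "x \<in> X" "y \<in> X" for x y
    using equiv_graph_on_invariant[OF assms(3,6)] ord that by auto
  ultimately show "graph_on X \<alpha> O (E - le)\<inverse> = (E - le)\<inverse> O graph_on X \<alpha>"
    by (rule graph_on_relcomp_commute[OF bij])
  have "(E - le)\<inverse> \<in> Up le E"
    using assms(2,3) by (intro converse_Diff_in_Up) (auto simp: equiv_def partial_order_on_def preorder_on_def)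
  with assms(3,6) ord show "graph_on X \<alpha> O (E - le)\<inverse> \<in> Up le E"
    by (blast intro: graph_on_relcomp_Up)
qed

end
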